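(* Let $\varepsilon>0$, $\kappa\ge \frac14$, $\kappa_0=\frac18$, $\kappa^*=\kappa-\kappa_0$. For any two real periodic grid functions $v,w$ on the $N\times N$ grid with equal means ($h^2\sum_{i,j}v_{i,j}=h^2\sum_{i,j}w_{i,j}$), $$E_N(v)-E_N(w)\le \langle L_N v+f_N(w),\,v-w\rangle-\frac{\varepsilon^2}{2}\|\Delta_N(v-w)\|_2^2-\kappa^*\|\nabla_N(v-w)\|_2^2.$$
   Context: Setting: $\Omega=(0,1)^2$, $N=2K+1$, $h=1/N$, grid $x_i=ih$, $y_j=jh$; periodic grid functions have discrete Fourier expansions $f_{i,j}=\sum_{k,\ell=-K}^{K}\hat f_{k,\ell}\exp(2\pi\mathrm{i}(kx_i+\ell y_j))$. Spectral operators: $\mathcal D_{Nx}$, $\mathcal D_{Ny}$ multiply $\hat f_{k,\ell}$ by $2\pi\mathrm{i}k$, $2\pi\mathrm{i}\ell$; $\nabla_N f=(\mathcal D_{Nx}f,\mathcal D_{Ny}f)$, $\nabla_N\cdot(f_1,f_2)=\mathcal D_{Nx}f_1+\mathcal D_{Ny}f_2$, $\Delta_N=\mathcal D_{Nx}^2+\mathcal D_{Ny}^2$. Inner product $\langle f,g\rangle=h^2\sum_{i,j=0}^{N-1}f_{i,j}g_{i,j}$, $\|f\|_2=\langle f,f\rangle^{1/2}$. $L_N=\varepsilon^2\Delta_N^2-\kappa\Delta_N$. Pointwise nonlinearity $f_N(u)=\nabla_N\cdot\Big(\frac{\nabla_N u}{1+|\nabla_N u|^2}\Big)+\kappa\Delta_N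 u$, where the quotient is computed pointwise on the grid. Discrete energy: $E_N(\phi)=h^2\sum_{i,j=0}^{N-1}\big(-\frac12\ln(1+|\nabla_N\phi|^2)_{i,j}\big)+\frac{\varepsilon^2}{2}\|\Delta_N\phi\|_2^2$. *)

theory Defs
  imports Complex_Main
begin

text \<open>Periodic grid functions on the N x N grid, N = 2K+1, are represented as
  functions nat => nat => real; only the values at indices i,j < N are used.\<close>

type_synonym gridfun = "nat \<Rightarrow> nat \<Rightarrow> real"

definition gridN :: "nat \<Rightarrow> nat" where
  "gridN K = 2 * K + 1"

definition hstep :: "nat \<Rightarrow> real" where
  "hstep K = 1 / real (gridN K)"

text \<open>Discrete Fourier coefficients hat f_{k,l}, k,l in {-K..K}, such that
  f_{i,j} = sum_{k,l} hat f_{k,l} exp(2 pi i (k x_i + l y_j)), x_i = i h.\<close>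
definition fcoef :: "nat \<Rightarrow> gridfun \<Rightarrow> int \<Rightarrow> int \<Rightarrow> complex" where
  "fcoef K f k l =
     (1 / of_nat (gridN K ^ 2)) *
     (\<Sum>i<gridN K. \<Sum>j<gridN K.
        complex_of_real (f i j) *
        cis (- 2 * pi * (real_of_int k * (real i * hstep K) + real_of_int l * (real j * hstep K))))"

text \<open>Spectral (Fourier multiplier) operator with symbol m; applied to real grid
  functions with odd-symmetric/even-symmetric symbols as below the result is real,
  so taking the real part is exact.\<close>
definition spec_op :: "nat \<Rightarrow> (int \<Rightarrow> int \<Rightarrow> complex) \<Rightarrow> gridfun \<Rightarrow> gridfun" where
  "spec_op K m f i j =
     Re (\<Sum>k\<in>{- int K..int K}. \<Sum>l\<in>{- int K..int K}.
           m k l * fcoef K f k l *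
           cis (2 * pi * (real_of_int k * (real i * hstep K) + real_of_int l * (real j * hstep K))))"

definition DNx :: "nat \<Rightarrow> gridfun \<Rightarrow> gridfun" where
  "DNx K = spec_op K (\<lambda>k l. 2 * complex_of_real pi * \<i> * of_int k)"

definition DNy :: "nat \<Rightarrow> gridfun \<Rightarrow> gridfun" where
  "DNy K = spec_op K (\<lambda>k l. 2 * complex_of_real pi * \<i> * of_int l)"

definition divN :: "nat \<Rightarrow> gridfun \<Rightarrow> gridfun \<Rightarrow> gridfun" where
  "divN K f1 f2 = (\<lambda>i j. DNx K f1 i j + DNy K f2 i j)"

definition lapN :: "nat \<Rightarrow> gridfun \<Rightarrow> gridfun" where
  "lapN K f = (\<lambda>i j. DNx K (DNx K f) i j + DNy K (DNy K f) i j)"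

definition ginner :: "nat \<Rightarrow> gridfun \<Rightarrow> gridfun \<Rightarrow> real" where
  "ginner K f g = hstep K ^ 2 * (\<Sum>i<gridN K. \<Sum>j<gridN K. f i j * g i j)"

definition gnorm :: "nat \<Rightarrow> gridfun \<Rightarrow> real" where
  "gnorm K f = sqrt (ginner K f f)"

definition gradnorm :: "nat \<Rightarrow> gridfun \<Rightarrow> real" where
  "gradnorm K f = sqrt (gnorm K (DNx K f) ^ 2 + gnorm K (DNy K f) ^ 2)"

definition gradsq :: "nat \<Rightarrow> gridfun \<Rightarrow> gridfun" where
  "gradsq K f = (\<lambda>i j. (DNx K f i j)\<^sup>2 + (DNy K f i j)\<^sup>2)"

definition LN :: "nat \<Rightarrow> real \<Rightarrow> real \<Rightarrow> gridfun \<Rightarrow> gridfun" where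
  "LN K \<epsilon> \<kappa> f = (\<lambda>i j. \<epsilon>\<^sup>2 * lapN K (lapN K f) i j - \<kappa> * lapN K f i j)"

definition fN :: "nat \<Rightarrow> real \<Rightarrow> gridfun \<Rightarrow> gridfun" where
  "fN K \<kappa> u = (\<lambda>i j.
     divN K (\<lambda>a b. DNx K u a b / (1 + gradsq K u a b))
            (\<lambda>a b. DNy K u a b / (1 + gradsq K u a b)) i j
     + \<kappa> * lapN K u i j)"

definition EN :: "nat \<Rightarrow> real \<Rightarrow> gridfun \<Rightarrow> real" where
  "EN K \<epsilon> \<phi> =
     hstep K ^ 2 * (\<Sum>i<gridN K. \<Sum>j<gridN K. - (1/2) * ln (1 + gradsq K \<phi> i j))
     + \<epsilon>\<^sup>2 / 2 * gnorm K (lapN K \<phi>) ^ 2"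

end

theory Submission
  imports Defs "HOL-Analysis.Euclidean_Space"
begin

text \<open>The logarithmic part of the energy is F(p) = -ln(1 + |p|^2)/2 evaluated at the
  discrete gradient. F is not convex, but it satisfies the descent inequality
  F(a) \<le> F(b) + \<nabla>F(b)\<cdot>(a - b) + |a - b|^2/8 with \<nabla>F(b) = -b/(1 + |b|^2); by Cauchy-Schwarz
  and the reverse triangle inequality this reduces to the radial profile, a one-variable calculus
  fact. This one-sided estimate is what costs \<kappa>_0 = 1/8.
  Summing it over the grid and moving the spectral derivatives across the inner product (their
  symbols are purely imaginary, so by Parseval they are skew-adjoint) produces the terms of f_N,
  while the \<epsilon>^2 and \<kappa> parts are exact quadratic identities.\<close>

lemma min_at_sign_change_of_deriv:
  fixes f c :: "real \<Rightarrow> real"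
  assumes deriv: "\<And>x. (f has_real_derivative (x - s) * c x) (at x)"
    and c_nonneg: "\<And>x. c x \<ge> 0"
  shows "f s \<le> f r"
proof (cases "s \<le> r")
  case True
  then show ?thesis
    by (rule DERIV_nonneg_imp_nondecreasing) (use deriv c_nonneg in \<open>auto intro!: exI\<close>)
next
  case False
  then show ?thesis
    by (intro DERIV_nonpos_imp_nonincreasing[of r s f])
       (use deriv c_nonneg in \<open>auto intro!: exI mult_nonpos_nonneg\<close>)
qed

lemma ln_one_plus_square_descent:
  fixes r s :: real
  shows "- ln (1 + r\<^sup>2) / 2 \<le> - ln (1 + s\<^sup>2) / 2 - s / (1 + s\<^sup>2) * (r - s) + (r - s)\<^sup>2 / 8"
proof -
  have pos: "1 + x\<^sup>2 > 0" for x :: real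
    by (simp add: add_pos_nonneg)
  define f where "f x = - ln (1 + s\<^sup>2) / 2 - s / (1 + s\<^sup>2) * (x - s) + (x - s)\<^sup>2 / 8 + ln (1 + x\<^sup>2) / 2" for x
  \<comment> \<open>f' factors as (x - s) times this positive cofactor, so f is minimal at s, where it vanishes\<close>
  define c where "c x = ((x * s - 2)\<^sup>2 + x\<^sup>2 + s\<^sup>2 + 1) / (4 * (1 + x\<^sup>2) * (1 + s\<^sup>2))" for x
  have "(f has_real_derivative - s / (1 + s\<^sup>2) + (x - s) / 4 + x / (1 + x\<^sup>2)) (at x)" for x
    unfolding f_def using pos[of x] pos[of s]
    by (auto intro!: derivative_eq_intros simp: power2_eq_square) (simp add: field_simps)
  moreover have "- s / (1 + s\<^sup>2) + (x - s) / 4 + x / (1 + x\<^sup>2) = (x - s) * c x" for x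
  proof -
    have "1 + x * x \<noteq> 0" "1 + s * s \<noteq> 0"
      using pos[of x] pos[of s] by (simp_all add: power2_eq_square)
    then show ?thesis
      unfolding c_def by (simp add: field_simps power2_eq_square)
  qed
  moreover have "c x \<ge> 0" for x
    unfolding c_def using pos[of x] pos[of s] by simp
  ultimately have "f s \<le> f r"
    by (intro min_at_sign_change_of_deriv[of f s c]) simp_all
  then show ?thesis
    unfolding f_def by simp
qed

lemma ln_one_plus_norm_square_descent:
  fixes a b :: "'a :: real_inner"
  shows "- ln (1 + (norm a)\<^sup>2) / 2
         \<le> - ln (1 + (norm b)\<^sup>2) / 2 - inner b (a - b) / (1 + (norm b)\<^sup>2) + (norm (a - b))\<^sup>2 / 8"
proof -
  have radial: "(norm b)\<^sup>2 - norm b * norm a \<le> (norm b)\<^sup>2 - inner b a"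
    using Cauchy_Schwarz_ineq2[of b a] by (simp add: mult.commute)
  have "(norm a - norm b)\<^sup>2 \<le> (norm (a - b))\<^sup>2"
    using power_mono[OF norm_triangle_ineq3[of a b] abs_ge_zero, of 2] by simp
  moreover have "- norm b / (1 + (norm b)\<^sup>2) * (norm a - norm b) \<le> - inner b (a - b) / (1 + (norm b)\<^sup>2)"
  proof -
    have "- norm b * (norm a - norm b) \<le> - inner b (a - b)"
      using radial by (simp add: inner_diff_right right_diff_distrib power2_eq_square flip: power2_norm_eq_inner)
    then show ?thesis
      by (simp add: divide_right_mono add_pos_nonneg)
  qed
  ultimately show ?thesis
    using ln_one_plus_square_descent[of "norm a" "norm b"] by linarith
qed

lemma sum_swap_pairs:
  "(\<Sum>i\<in>A. \<Sum>j\<in>B. \<Sum>k\<in>C. \<Sum>l\<in>D. F i j k l) = (\<Sum>k\<in>C. \<Sum>l\<in>D. \<Sum>i\<in>A. \<Sum>j\<in>B. F i j k l)"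
  by (simp only: sum.cartesian_product)
     (rule sum.reindex_bij_witness[of _ "\<lambda>(k, l, i, j). (i, j, k, l)" "\<lambda>(i, j, k, l). (k, l, i, j)"]; auto)

definition fourier_mode :: "nat \<Rightarrow> int \<Rightarrow> int \<Rightarrow> nat \<Rightarrow> nat \<Rightarrow> complex" where
  "fourier_mode K k l i j =
     cis (2 * pi * (real_of_int k * (real i * hstep K) + real_of_int l * (real j * hstep K)))"

lemma gridN_pos: "0 < gridN K"
  by (simp add: gridN_def)

lemma grid_sum_fourier_mode:
  "(\<Sum>i<gridN K. \<Sum>j<gridN K. complex_of_real (g i j) * fourier_mode K k l i j)
     = of_nat (gridN K ^ 2) * cnj (fcoef K g k l)"
proof -
  have "(of_nat (gridN K ^ 2) :: complex) \<noteq> 0"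
    using gridN_pos[of K] by (metis of_nat_eq_0_iff power_not_zero less_irrefl)
  moreover have "cnj (fcoef K g k l) = (\<Sum>i<gridN K. \<Sum>j<gridN K.
      complex_of_real (g i j) * fourier_mode K k l i j) / of_nat (gridN K ^ 2)"
    unfolding fcoef_def fourier_mode_def by (simp add: cis_cnj)
  ultimately show ?thesis
    by simp
qed

lemma ginner_spec_op:
  "ginner K (spec_op K m f) g
     = Re (\<Sum>k\<in>{- int K..int K}. \<Sum>l\<in>{- int K..int K}. m k l * fcoef K f k l * cnj (fcoef K g k l))"
proof -
  let ?I = "{- int K..int K}" and ?G = "{..<gridN K}"
  let ?c = "\<lambda>k l. m k l * fcoef K f k l"
  have Re_mult_real: "Re z * r = Re (complex_of_real r * z)" "r * Re z = Re (complex_of_real r * z)" for z r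
    by simp_all
  have "hstep K ^ 2 * real (gridN K ^ 2) = 1"
    by (simp add: hstep_def power_divide gridN_pos)
  then have scale: "complex_of_real (hstep K ^ 2) * of_nat (gridN K ^ 2) = 1"
    by (metis of_real_of_nat_eq of_real_mult of_real_1)
  have "(\<Sum>i\<in>?G. \<Sum>j\<in>?G. spec_op K m f i j * g i j)
      = Re (\<Sum>i\<in>?G. \<Sum>j\<in>?G. complex_of_real (g i j) * (\<Sum>k\<in>?I. \<Sum>l\<in>?I. ?c k l * fourier_mode K k l i j))"
    by (simp only: spec_op_def fourier_mode_def Re_mult_real flip: Re_sum)
  also have "(\<Sum>i\<in>?G. \<Sum>j\<in>?G. complex_of_real (g i j) * (\<Sum>k\<in>?I. \<Sum>l\<in>?I. ?c k l * fourier_mode K k l i j))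
      = (\<Sum>i\<in>?G. \<Sum>j\<in>?G. \<Sum>k\<in>?I. \<Sum>l\<in>?I. ?c k l * (complex_of_real (g i j) * fourier_mode K k l i j))"
    by (simp add: sum_distrib_left mult_ac)
  also have "\<dots> = (\<Sum>k\<in>?I. \<Sum>l\<in>?I. ?c k l * (\<Sum>i\<in>?G. \<Sum>j\<in>?G. complex_of_real (g i j) * fourier_mode K k l i j))"
    unfolding sum_distrib_left by (rule sum_swap_pairs)
  also have "\<dots> = of_nat (gridN K ^ 2) * (\<Sum>k\<in>?I. \<Sum>l\<in>?I. ?c k l * cnj (fcoef K g k l))"
    by (simp add: grid_sum_fourier_mode sum_distrib_left mult_ac)
  finally show ?thesis
    unfolding ginner_def by (simp only: Re_mult_real mult.assoc [symmetric] scale mult_1)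
qed

lemma ginner_spec_op_skew:
  assumes "\<And>k l. cnj (m k l) = - m k l"
  shows "ginner K (spec_op K m f) g = - ginner K f (spec_op K m g)"
proof -
  have "ginner K f (spec_op K m g) = ginner K (spec_op K m g) f"
    unfolding ginner_def by (simp add: mult.commute)
  also have "\<dots> = Re (cnj (\<Sum>k\<in>{- int K..int K}. \<Sum>l\<in>{- int K..int K}.
                     m k l * fcoef K g k l * cnj (fcoef K f k l)))"
    unfolding ginner_spec_op by (simp only: complex_cnj_cnj cnj.sel(1))
  also have "cnj (\<Sum>k\<in>{- int K..int K}. \<Sum>l\<in>{- int K..int K}. m k l * fcoef K g k l * cnj (fcoef K f k l))
      = - (\<Sum>k\<in>{- int K..int K}. \<Sum>l\<in>{- int K..int K}. m k l * fcoef K f k l * cnj (fcoef K g k l))"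
    by (simp add: assms sum_negf mult_ac)
  also have "Re (- (\<Sum>k\<in>{- int K..int K}. \<Sum>l\<in>{- int K..int K}. m k l * fcoef K f k l * cnj (fcoef K g k l)))
      = - ginner K (spec_op K m f) g"
    unfolding ginner_spec_op by (simp only: uminus_complex.sel)
  finally show ?thesis
    by simp
qed

lemma ginner_DNx_skew: "ginner K (DNx K f) g = - ginner K f (DNx K g)"
  unfolding DNx_def by (rule ginner_spec_op_skew) simp

lemma ginner_DNy_skew: "ginner K (DNy K f) g = - ginner K f (DNy K g)"
  unfolding DNy_def by (rule ginner_spec_op_skew) simp

lemma fcoef_diff: "fcoef K (\<lambda>i j. f i j - g i j) k l = fcoef K f k l - fcoef K g k l"
  unfolding fcoef_def by (simp add: ring_distribs sum_subtractf)

lemma spec_op_diff: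
  "spec_op K m (\<lambda>i j. f i j - g i j) = (\<lambda>i j. spec_op K m f i j - spec_op K m g i j)"
  unfolding spec_op_def fcoef_diff by (intro ext) (simp add: ring_distribs sum_subtractf)

lemma DNx_diff: "DNx K (\<lambda>i j. f i j - g i j) = (\<lambda>i j. DNx K f i j - DNx K g i j)"
  unfolding DNx_def by (rule spec_op_diff)

lemma DNy_diff: "DNy K (\<lambda>i j. f i j - g i j) = (\<lambda>i j. DNy K f i j - DNy K g i j)"
  unfolding DNy_def by (rule spec_op_diff)

lemma lapN_diff: "lapN K (\<lambda>i j. f i j - g i j) = (\<lambda>i j. lapN K f i j - lapN K g i j)"
  unfolding lapN_def DNx_diff DNy_diff by (intro ext) simp

lemma ginner_commute: "ginner K f g = ginner K g f"
  unfolding ginner_def by (simp add: mult.commute)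

lemma ginner_add_left: "ginner K (\<lambda>i j. f i j + g i j) h = ginner K f h + ginner K g h"
  unfolding ginner_def by (simp add: ring_distribs sum.distrib)

lemma ginner_diff_left: "ginner K (\<lambda>i j. f i j - g i j) h = ginner K f h - ginner K g h"
  unfolding ginner_def by (simp add: ring_distribs sum_subtractf)

lemma ginner_diff_right: "ginner K h (\<lambda>i j. f i j - g i j) = ginner K h f - ginner K h g"
  using ginner_diff_left[of K f g h] by (simp add: ginner_commute)

lemma ginner_self_nonneg: "ginner K f f \<ge> 0"
  unfolding ginner_def by (simp add: sum_nonneg)

lemma gnorm_square: "gnorm K f ^ 2 = ginner K f f"
  unfolding gnorm_def using ginner_self_nonneg by simp

lemma gradnorm_square: "gradnorm K f ^ 2 = ginner K (DNx K f) (DNx K f) + ginner K (DNy K f) (DNy K f)"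
  unfolding gradnorm_def gnorm_square by (simp add: add_nonneg_nonneg ginner_self_nonneg)

lemma gnorm_square_diff:
  "gnorm K f ^ 2 - gnorm K g ^ 2
     = 2 * ginner K f (\<lambda>i j. f i j - g i j) - gnorm K (\<lambda>i j. f i j - g i j) ^ 2"
  unfolding gnorm_square ginner_diff_left ginner_diff_right by (simp add: ginner_commute)

lemma ginner_divN: "ginner K (divN K f1 f2) g = - (ginner K f1 (DNx K g) + ginner K f2 (DNy K g))"
  unfolding divN_def ginner_add_left ginner_DNx_skew ginner_DNy_skew by simp

lemma ginner_lapN_sym: "ginner K (lapN K f) g = ginner K f (lapN K g)"
  unfolding lapN_def ginner_add_left ginner_commute[of K f] ginner_DNx_skew ginner_DNy_skew
  by (simp add: ginner_commute)

lemma ginner_lapN_self: "ginner K (lapN K f) f = - (gradnorm K f ^ 2)"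
  unfolding lapN_def ginner_add_left ginner_DNx_skew ginner_DNy_skew gradnorm_square by simp

definition flux :: "nat \<Rightarrow> (nat \<Rightarrow> gridfun \<Rightarrow> gridfun) \<Rightarrow> gridfun \<Rightarrow> gridfun" where
  "flux K D u = (\<lambda>a b. D K u a b / (1 + gradsq K u a b))"

definition log_energy :: "nat \<Rightarrow> gridfun \<Rightarrow> real" where
  "log_energy K \<phi> = hstep K ^ 2 * (\<Sum>i<gridN K. \<Sum>j<gridN K. - (1/2) * ln (1 + gradsq K \<phi> i j))"

lemma log_energy_descent:
  fixes v w :: gridfun
  defines "e \<equiv> \<lambda>i j. v i j - w i j"
  shows "log_energy K v
         \<le> log_energy K w - (ginner K (flux K DNx w) (DNx K e) + ginner K (flux K DNy w) (DNy K e))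
           + gradnorm K e ^ 2 / 8"
proof -
  have pointwise: "- (1/2) * ln (1 + gradsq K v i j)
      \<le> - (1/2) * ln (1 + gradsq K w i j)
         - (flux K DNx w i j * DNx K e i j + flux K DNy w i j * DNy K e i j)
         + (DNx K e i j * DNx K e i j + DNy K e i j * DNy K e i j) / 8" for i j
    using ln_one_plus_norm_square_descent[of "(DNx K v i j, DNy K v i j)" "(DNx K w i j, DNy K w i j)"]
    unfolding e_def DNx_diff DNy_diff flux_def gradsq_def
    by (simp add: norm_Pair add_divide_distrib power2_eq_square)
  have "log_energy K v \<le> hstep K ^ 2 * (\<Sum>i<gridN K. \<Sum>j<gridN K. - (1/2) * ln (1 + gradsq K w i j)
         - (flux K DNx w i j * DNx K e i j + flux K DNy w i j * DNy K e i j)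
         + (DNx K e i j * DNx K e i j + DNy K e i j * DNy K e i j) / 8)"
    unfolding log_energy_def by (intro mult_left_mono sum_mono pointwise) simp
  also have "\<dots> = log_energy K w - (ginner K (flux K DNx w) (DNx K e) + ginner K (flux K DNy w) (DNy K e))
           + gradnorm K e ^ 2 / 8"
    unfolding log_energy_def ginner_def gradnorm_square
    by (simp add: sum.distrib sum_subtractf sum_negf sum_divide_distrib[symmetric] algebra_simps)
  finally show ?thesis .
qed

lemma ginner_LN_fN:
  fixes v w :: gridfun
  defines "e \<equiv> \<lambda>i j. v i j - w i j"
  shows "ginner K (\<lambda>i j. LN K \<epsilon> \<kappa> v i j + fN K \<kappa> w i j) e
         = \<epsilon>\<^sup>2 * ginner K (lapN K v) (lapN K e) + \<kappa> * gradnorm K e ^ 2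
           - (ginner K (flux K DNx w) (DNx K e) + ginner K (flux K DNy w) (DNy K e))"
proof -
  have "ginner K (\<lambda>i j. LN K \<epsilon> \<kappa> v i j + fN K \<kappa> w i j) e
      = \<epsilon>\<^sup>2 * ginner K (lapN K (lapN K v)) e - \<kappa> * ginner K (\<lambda>i j. lapN K v i j - lapN K w i j) e
        + ginner K (divN K (flux K DNx w) (flux K DNy w)) e"
    unfolding ginner_def LN_def fN_def flux_def
    by (simp add: sum.distrib sum_subtractf sum_distrib_left algebra_simps)
  then show ?thesis
    unfolding e_def lapN_diff[symmetric]
    by (simp add: ginner_lapN_sym[of K "lapN K v"] ginner_lapN_self ginner_divN)
qed

theorem lemma2p6:
  fixes K :: nat and \<epsilon> \<kappa> :: real and v w :: gridfun
  assumes "\<epsilon> > 0" and "\<kappa> \<ge> 1/4"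
    and "hstep K ^ 2 * (\<Sum>i<gridN K. \<Sum>j<gridN K. v i j)
         = hstep K ^ 2 * (\<Sum>i<gridN K. \<Sum>j<gridN K. w i j)"
  shows "EN K \<epsilon> v - EN K \<epsilon> w
         \<le> ginner K (\<lambda>i j. LN K \<epsilon> \<kappa> v i j + fN K \<kappa> w i j) (\<lambda>i j. v i j - w i j)
           - \<epsilon>\<^sup>2 / 2 * gnorm K (lapN K (\<lambda>i j. v i j - w i j)) ^ 2
           - (\<kappa> - 1/8) * gradnorm K (\<lambda>i j. v i j - w i j) ^ 2"
proof -
  define e where "e = (\<lambda>i j. v i j - w i j)"
  have "EN K \<epsilon> v - EN K \<epsilon> w
      = log_energy K v - log_energy K w + \<epsilon>\<^sup>2 / 2 * (gnorm K (lapN K v) ^ 2 - gnorm K (lapN K w) ^ 2)"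
    unfolding EN_def log_energy_def by (simp add: algebra_simps)
  also have "\<dots> = log_energy K v - log_energy K w
      + \<epsilon>\<^sup>2 * ginner K (lapN K v) (lapN K e) - \<epsilon>\<^sup>2 / 2 * gnorm K (lapN K e) ^ 2"
    unfolding gnorm_square_diff e_def lapN_diff by (simp add: algebra_simps)
  finally show ?thesis
    using log_energy_descent[of K v w] ginner_LN_fN[of K \<epsilon> \<kappa> v w]
    unfolding e_def by (simp add: algebra_simps)
qed

end
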